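(* Let $Y$ be a sofic shift. For any labeled graph $(G,L_G)$ presenting $Y$ which is right-resolving, regular and follower-separated, the number $\# V_G$ of vertices is at most the number of distinct sets $F(y)$, $y\in Y$. Moreover, the future cover $(\mathbb K(Y),L_{\mathbb K(Y)})$ is, up to isomorphism of labeled graphs, the only presentation of $Y$ which is right-resolving, regular and follower-separated and whose number of vertices equals the number of distinct sets $F(y)$, $y\in Y$.
   Context: A labeled graph $(G,L_G)$: finite directed graph $G$ (vertices $V_G$, edges $E_G$, source/terminal maps $s_G,t_G$), without sinks or sources, with labeling $L_G:E_G\to A$, $A$ a finite alphabet; $X_G$ is its edge shift; $L_G$ acts coordinatewise on paths; it presents $Y=L_G(X_G)$. $X_G[0,\infty)$ denotes right-infinite paths, $X_G(-\infty,-1]$ left-infinite paths; $s_G$ of a right-infinite path is the source of its first edge, $t_G$ of a left-infinite path is the terminal vertex of its last edge; $Y[0,\infty)=\{y_{[0,\infty)}:y\in Y\}$. Right-resolving: distinct edges with the same source have distinct labels. Follower set of a vertex: $f_G(v)=\{L_G(x):x\in X_G[0,\infty), s_G(x)=v\}$. For $y\in Y$: $F(y)=\{w\in Y[0,\infty): y_{(-\infty,-1]}w\in Y\}$ (the follower sets of $Y$). A vertex $v$ is regular if there is $z\in X_G$ with $t_G(z_{(-\infty,-1]})=v$ and $f_G(v)=F(L_G(z))$; the labeled graph is regular if all vertices are regular. Follower-separated: $f_G(v)=f_G(w)$ implies $v=w$. Future cover $(\mathbb K(Y),L_{\mathbb K(Y)})$: vertices are the distinct sets $F(y)$, $y\in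 Y$; there is an edge labeled $a\in A$ from $F(y)$ to $F(z)$ exactly when $F(z)=\{w\in A^{\mathbb N}: aw\in F(y)\}$ (one edge per such pair and label). Isomorphism of labeled graphs: a graph isomorphism preserving labels. *)

theory Defs
  imports Main
begin

record ('v, 'e, 'a) lgraph =
  verts :: "'v set"
  edges :: "'e set"
  src   :: "'e \<Rightarrow> 'v"
  trg   :: "'e \<Rightarrow> 'v"
  lab   :: "'e \<Rightarrow> 'a"

definition lgraph :: "('v, 'e, 'a) lgraph \<Rightarrow> bool" where
  "lgraph G \<longleftrightarrow> finite (verts G) \<and> finite (edges G)
     \<and> (\<forall>e\<in>edges G. src G e \<in> verts G \<and> trg G e \<in> verts G)
     \<and> (\<forall>v\<in>verts G. (\<exists>e\<in>edges G. src G e = v) \<and> (\<exists>e\<in>edges G. trg G e = v))"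

definition edge_shift :: "('v, 'e, 'a) lgraph \<Rightarrow> (int \<Rightarrow> 'e) set" where
  "edge_shift G = {x. (\<forall>i. x i \<in> edges G) \<and> (\<forall>i. trg G (x i) = src G (x (i + 1)))}"

definition right_paths :: "('v, 'e, 'a) lgraph \<Rightarrow> (nat \<Rightarrow> 'e) set" where
  "right_paths G = {x. (\<forall>n. x n \<in> edges G) \<and> (\<forall>n. trg G (x n) = src G (x (Suc n)))}"

definition presented :: "('v, 'e, 'a) lgraph \<Rightarrow> (int \<Rightarrow> 'a) set" where
  "presented G = (\<lambda>x. lab G \<circ> x) ` edge_shift G"

definition presents :: "('v, 'e, 'a) lgraph \<Rightarrow> (int \<Rightarrow> 'a) set \<Rightarrow> bool" where
  "presents G Y \<longleftrightarrow> lgraph G \<and> presented G = Y"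

text \<open>Sofic shift: presented by some (finite) labeled graph.  Finite vertex/edge
  sets can always be encoded in nat, so nat-typed graphs suffice.\<close>
definition sofic :: "(int \<Rightarrow> 'a) set \<Rightarrow> bool" where
  "sofic Y \<longleftrightarrow> (\<exists>G :: (nat, nat, 'a) lgraph. presents G Y)"

definition right_resolving :: "('v, 'e, 'a) lgraph \<Rightarrow> bool" where
  "right_resolving G \<longleftrightarrow>
     (\<forall>e1\<in>edges G. \<forall>e2\<in>edges G. src G e1 = src G e2 \<and> lab G e1 = lab G e2 \<longrightarrow> e1 = e2)"

definition vfollower :: "('v, 'e, 'a) lgraph \<Rightarrow> 'v \<Rightarrow> (nat \<Rightarrow> 'a) set" where
  "vfollower G v = {lab G \<circ> x | x. x \<in> right_paths G \<and> src G (x 0) = v}"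

definition right_rays :: "(int \<Rightarrow> 'a) set \<Rightarrow> (nat \<Rightarrow> 'a) set" where
  "right_rays Y = {(\<lambda>n. y (int n)) | y. y \<in> Y}"

definition glue :: "(int \<Rightarrow> 'a) \<Rightarrow> (nat \<Rightarrow> 'a) \<Rightarrow> (int \<Rightarrow> 'a)" where
  "glue y w = (\<lambda>i. if i < 0 then y i else w (nat i))"

definition follower :: "(int \<Rightarrow> 'a) set \<Rightarrow> (int \<Rightarrow> 'a) \<Rightarrow> (nat \<Rightarrow> 'a) set" where
  "follower Y y = {w. w \<in> right_rays Y \<and> glue y w \<in> Y}"

definition follower_sets :: "(int \<Rightarrow> 'a) set \<Rightarrow> (nat \<Rightarrow> 'a) set set" where
  "follower_sets Y = follower Y ` Y"

definition regular_vertex :: "('v, 'e, 'a) lgraph \<Rightarrow> 'v \<Rightarrow> bool" where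
  "regular_vertex G v \<longleftrightarrow>
     (\<exists>z\<in>edge_shift G. trg G (z (-1)) = v \<and>
        vfollower G v = follower (presented G) (lab G \<circ> z))"

definition regular :: "('v, 'e, 'a) lgraph \<Rightarrow> bool" where
  "regular G \<longleftrightarrow> (\<forall>v\<in>verts G. regular_vertex G v)"

definition follower_separated :: "('v, 'e, 'a) lgraph \<Rightarrow> bool" where
  "follower_separated G \<longleftrightarrow>
     (\<forall>v\<in>verts G. \<forall>w\<in>verts G. vfollower G v = vfollower G w \<longrightarrow> v = w)"

text \<open>Future cover K(Y): vertices are the F(y); an edge labeled a from u to v
  exactly when v = {w. a w \<in> u}; edges are triples (u, a, v).\<close>
definition future_cover :: "(int \<Rightarrow> 'a) set \<Rightarrow>
    ((nat \<Rightarrow> 'a) set, (nat \<Rightarrow> 'a) set \<times> 'a \<times> (nat \<Rightarrow> 'a) set, 'a) lgraph" where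
  "future_cover Y =
     \<lparr> verts = follower_sets Y,
       edges = {(u, a, v). u \<in> follower_sets Y \<and> v \<in> follower_sets Y
                           \<and> v = {w. case_nat a w \<in> u}},
       src = fst, trg = (\<lambda>e. snd (snd e)), lab = (\<lambda>e. fst (snd e)) \<rparr>"

definition lg_iso :: "('v, 'e, 'a) lgraph \<Rightarrow> ('w, 'f, 'a) lgraph \<Rightarrow> bool" where
  "lg_iso G H \<longleftrightarrow> (\<exists>\<phi> \<psi>. bij_betw \<phi> (verts G) (verts H) \<and> bij_betw \<psi> (edges G) (edges H)
     \<and> (\<forall>e\<in>edges G. src H (\<psi> e) = \<phi> (src G e) \<and> trg H (\<psi> e) = \<phi> (trg G e)
                    \<and> lab H (\<psi> e) = lab G e))"

end

theory Submission
  imports Defs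
begin

text \<open>
  In a right-resolving graph the follower set at the end of an edge labelled \<open>a\<close> is the
  \<open>a\<close>-derivative \<open>{w. a w \<in> f(v)}\<close> of the follower set at its start. Regularity makes every
  vertex follower set \<open>f(v)\<close> one of the sets \<open>F(y)\<close>, and follower separation makes
  \<open>v \<mapsto> f(v)\<close> injective; this gives the bound. If the numbers agree, \<open>v \<mapsto> f(v)\<close> is a
  bijection onto the vertices of the future cover, and by the derivative rule it extends to a
  bijection of edges, since both graphs are right-resolving.

  For the future cover itself the main point is \<open>f(F(y)) = F(y)\<close>: every path from \<open>F(y)\<close>
  reads words all of whose prefixes continue inside \<open>F(y)\<close>, and \<open>Y\<close> is closed (Koenig's lemma
  on the finite graph presenting \<open>Y\<close>). There are finitely many sets \<open>F(y)\<close>, because each is the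
  union of the vertex follower sets over the vertices at which a path reading the past of \<open>y\<close>
  can end.
\<close>

lemma pigeonhole_antimono:
  assumes "finite S"
    and "\<And>m. \<exists>s\<in>S. Q m s"
    and "\<And>m m' s. Q m s \<Longrightarrow> m' \<le> m \<Longrightarrow> Q m' s"
  shows "\<exists>s\<in>S. \<forall>m::nat. Q m s"
proof (rule ccontr)
  assume "\<not> ?thesis"
  then obtain N where N: "\<And>s. s \<in> S \<Longrightarrow> \<not> Q (N s) s" by metis
  obtain s where s: "s \<in> S" "Q (sum N S) s" using assms(2) by blast
  have "N s \<le> sum N S" using assms(1) s(1) by (simp add: member_le_sum)
  then show False using N s assms(3) by blast
qed

lemma koenig:
  assumes fin: "\<And>k. finite (S k)"
    and paths: "\<And>m. \<exists>f. \<forall>k<m. f k \<in> S k \<and> R (f k) (f (Suc k))"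
  shows "\<exists>f. \<forall>k. f k \<in> S k \<and> R (f k) (f (Suc k))"
proof -
  \<comment> \<open>\<open>P n s\<close>: the state \<open>s\<close> occurs at position \<open>n\<close> of arbitrarily long finite paths.\<close>
  define P where "P n s \<longleftrightarrow> (\<forall>m. \<exists>f. f n = s \<and> (\<forall>k<m. f k \<in> S k \<and> R (f k) (f (Suc k))))"
    for n s
  have P_mono: "\<exists>f. f n = s \<and> (\<forall>k<m'. f k \<in> S k \<and> R (f k) (f (Suc k)))"
    if "\<exists>f. f n = s \<and> (\<forall>k<m. f k \<in> S k \<and> R (f k) (f (Suc k)))" "m' \<le> m" for n s m m'
    using that by (metis order_less_le_trans)
  have P_in: "s \<in> S n" if "P n s" for n s
    using that[unfolded P_def, rule_format, of "Suc n"] by auto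
  have "\<exists>s\<in>S 0. P 0 s"
    unfolding P_def
  proof (rule pigeonhole_antimono[OF fin])
    fix m
    obtain f where "\<forall>k<Suc m. f k \<in> S k \<and> R (f k) (f (Suc k))" using paths by blast
    then show "\<exists>s\<in>S 0. \<exists>f'. f' 0 = s \<and> (\<forall>k<m. f' k \<in> S k \<and> R (f' k) (f' (Suc k)))"
      by (intro bexI[of _ "f 0"]) auto
  qed (rule P_mono)
  moreover have "\<exists>s'. P (Suc n) s' \<and> R s s'" if "P n s" for n s
  proof -
    have "\<exists>s'\<in>S (Suc n). \<forall>m. R s s' \<and>
        (\<exists>f. f (Suc n) = s' \<and> (\<forall>k<m. f k \<in> S k \<and> R (f k) (f (Suc k))))"
    proof (rule pigeonhole_antimono[OF fin])
      fix m
      obtain f where f: "f n = s" "\<forall>k<max m (n + 2). f k \<in> S k \<and> R (f k) (f (Suc k))"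
        using \<open>P n s\<close> unfolding P_def by blast
      then show "\<exists>s'\<in>S (Suc n). R s s' \<and>
          (\<exists>f. f (Suc n) = s' \<and> (\<forall>k<m. f k \<in> S k \<and> R (f k) (f (Suc k))))"
        by (intro bexI[of _ "f (Suc n)"]) auto
    qed (use P_mono in blast)
    then show ?thesis unfolding P_def by blast
  qed
  ultimately obtain f where "\<forall>n. P n (f n) \<and> R (f n) (f (Suc n))"
    using dependent_nat_choice[of P "\<lambda>_. R"] by blast
  then show ?thesis using P_in by blast
qed

definition join_halves :: "(nat \<Rightarrow> 'a) \<Rightarrow> (nat \<Rightarrow> 'a) \<Rightarrow> int \<Rightarrow> 'a" where
  "join_halves l r i = (if i < 0 then l (nat (- i - 1)) else r (nat i))"

lemma join_halves_edge_shift: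
  assumes "r \<in> right_paths H" "\<And>k. l k \<in> edges H"
    and "\<And>k. trg H (l (Suc k)) = src H (l k)" "trg H (l 0) = src H (r 0)"
  shows "join_halves l r \<in> edge_shift H"
  unfolding edge_shift_def
proof (intro CollectI conjI allI)
  fix i
  show "join_halves l r i \<in> edges H"
    using assms(1,2) unfolding join_halves_def right_paths_def by simp
  consider "0 \<le> i" | "i = - 1" | "i < - 1" by linarith
  then show "trg H (join_halves l r i) = src H (join_halves l r (i + 1))"
  proof cases
    case 1
    then have "nat (i + 1) = Suc (nat i)" by simp
    then show ?thesis using 1 assms(1) unfolding join_halves_def right_paths_def by simp
  next
    case 3
    then have "nat (- i - 1) = Suc (nat (- (i + 1) - 1))" by simp
    then show ?thesis using 3 assms(3) unfolding join_halves_def by simp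
  qed (simp add: join_halves_def assms(4))
qed

lemma presented_limit_closed:
  assumes "lgraph H"
    and approx: "\<And>n. \<exists>q\<in>presented H. \<forall>i. \<bar>i\<bar> \<le> int n \<longrightarrow> q i = y i"
  shows "y \<in> presented H"
proof -
  \<comment> \<open>A state at level \<open>k\<close> is the pair of edges at positions \<open>k\<close> and \<open>-k-1\<close>.\<close>
  define S where "S k = {s. fst s \<in> edges H \<and> snd s \<in> edges H \<and> lab H (fst s) = y (int k)
      \<and> lab H (snd s) = y (- int k - 1) \<and> (k = 0 \<longrightarrow> trg H (snd s) = src H (fst s))}" for k
  define R where "R s s' \<longleftrightarrow> src H (fst s') = trg H (fst s) \<and> trg H (snd s') = src H (snd s)"
    for s s'
  have finite_S: "finite (S k)" for k
  proof (rule finite_subset)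
    show "S k \<subseteq> edges H \<times> edges H" unfolding S_def by (auto simp: mem_Times_iff)
    show "finite (edges H \<times> edges H)" using \<open>lgraph H\<close> unfolding lgraph_def by simp
  qed
  have finite_paths: "\<exists>f. \<forall>k<m. f k \<in> S k \<and> R (f k) (f (Suc k))" for m
  proof -
    obtain x where x: "x \<in> edge_shift H" "\<And>i. \<bar>i\<bar> \<le> int (Suc m) \<Longrightarrow> lab H (x i) = y i"
      using approx[of "Suc m"] unfolding presented_def by auto
    have step: "trg H (x j) = src H (x (j + 1))" and edge: "x j \<in> edges H" for j
      using x(1) unfolding edge_shift_def by blast+
    have "(x (int k), x (- int k - 1)) \<in> S k" if "k < m" for k
      using that step[of "- 1"] edge x(2)[of "int k"] x(2)[of "- int k - 1"] unfolding S_def by simp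
    moreover have "R (x (int k), x (- int k - 1)) (x (int (Suc k)), x (- int (Suc k) - 1))" for k
    proof -
      have "int k + 1 = int (Suc k)" "- int (Suc k) - 1 + 1 = - int k - 1" by simp_all
      then show ?thesis
        using step[of "int k"] step[of "- int (Suc k) - 1"] unfolding R_def prod.sel by metis
    qed
    ultimately show ?thesis by (intro exI[of _ "\<lambda>k. (x (int k), x (- int k - 1))"]) simp
  qed
  obtain f where "\<And>k. f k \<in> S k" and f_step: "\<And>k. R (f k) (f (Suc k))"
    using koenig[of S R, OF finite_S finite_paths] by blast
  then have f_edges: "fst (f k) \<in> edges H" "snd (f k) \<in> edges H"
    and f_labels: "lab H (fst (f k)) = y (int k)" "lab H (snd (f k)) = y (- int k - 1)"
    and f_link: "trg H (snd (f 0)) = src H (fst (f 0))" for k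
    unfolding S_def by blast+
  have "(\<lambda>k. fst (f k)) \<in> right_paths H"
    using f_edges f_step unfolding right_paths_def R_def by simp
  then have "join_halves (\<lambda>k. snd (f k)) (\<lambda>k. fst (f k)) \<in> edge_shift H"
    using f_edges f_step f_link unfolding R_def by (intro join_halves_edge_shift) simp_all
  moreover have "lab H \<circ> join_halves (\<lambda>k. snd (f k)) (\<lambda>k. fst (f k)) = y"
  proof
    fix i
    show "(lab H \<circ> join_halves (\<lambda>k. snd (f k)) (\<lambda>k. fst (f k))) i = y i"
      using f_labels(1)[of "nat i"] f_labels(2)[of "nat (- i - 1)"] unfolding join_halves_def by simp
  qed
  ultimately show ?thesis unfolding presented_def by blast
qed

definition seq_shift :: "int \<Rightarrow> (int \<Rightarrow> 'a) \<Rightarrow> int \<Rightarrow> 'a" where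
  "seq_shift k y = (\<lambda>i. y (i + k))"

lemma seq_shift_seq_shift: "seq_shift k (seq_shift l y) = seq_shift (k + l) y"
  unfolding seq_shift_def by (simp add: ac_simps)

lemma seq_shift_0 [simp]: "seq_shift 0 y = y"
  unfolding seq_shift_def by simp

lemma presented_seq_shift:
  assumes "y \<in> presented H"
  shows "seq_shift k y \<in> presented H"
proof -
  obtain x where "x \<in> edge_shift H" "y = lab H \<circ> x" using assms unfolding presented_def by blast
  then have "seq_shift k x \<in> edge_shift H" "seq_shift k y = lab H \<circ> seq_shift k x"
    unfolding edge_shift_def seq_shift_def by (auto simp: algebra_simps)
  then show ?thesis unfolding presented_def by blast
qed

lemma right_path_of_edge_shift: "x \<in> edge_shift H \<Longrightarrow> (\<lambda>n. x (int n)) \<in> right_paths H"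
  unfolding edge_shift_def right_paths_def by (simp add: add.commute)

lemma glue_edge_shift:
  assumes "x \<in> edge_shift H" "r \<in> right_paths H" "src H (r 0) = src H (x 0)"
  shows "glue x r \<in> edge_shift H"
  unfolding edge_shift_def
proof (intro CollectI conjI allI)
  fix i
  show "glue x r i \<in> edges H"
    using assms(1,2) unfolding edge_shift_def right_paths_def glue_def by simp
  consider "i < - 1" | "i = - 1" | "0 \<le> i" by linarith
  then show "trg H (glue x r i) = src H (glue x r (i + 1))"
  proof cases
    case 3
    then have "nat (i + 1) = Suc (nat i)" by simp
    then show ?thesis using 3 assms(2) unfolding right_paths_def glue_def by simp
  qed (use assms(1,3) in \<open>auto simp: edge_shift_def glue_def\<close>)
qed

lemma lab_glue: "lab H \<circ> glue x r = glue (lab H \<circ> x) (lab H \<circ> r)"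
  unfolding glue_def by auto

lemma glue_glue [simp]: "glue (glue y w) v = glue y v"
  unfolding glue_def by auto

lemma glue_right_part [simp]: "glue y (\<lambda>n. y (int n)) = y"
  unfolding glue_def by auto

lemma follower_eq: "follower Y y = {w. glue y w \<in> Y}"
proof -
  have "w \<in> right_rays Y" if "glue y w \<in> Y" for w
  proof -
    have "w = (\<lambda>n. glue y w (int n))" unfolding glue_def by simp
    then show ?thesis using that unfolding right_rays_def by blast
  qed
  then show ?thesis unfolding follower_def by blast
qed

lemma right_part_in_follower: "y \<in> Y \<Longrightarrow> (\<lambda>n. y (int n)) \<in> follower Y y"
  unfolding follower_eq by simp

lemma ex_mem_follower_set: "u \<in> follower_sets Y \<Longrightarrow> \<exists>w. w \<in> u"
  unfolding follower_sets_def using right_part_in_follower by blast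

lemma follower_glue [simp]: "follower Y (glue y w) = follower Y y"
  unfolding follower_eq by simp

lemma seq_shift_glue_Suc: "seq_shift 1 (glue y (case_nat (y 0) w)) = glue (seq_shift 1 y) w"
proof
  fix i :: int
  consider "i < - 1" | "i = - 1" | "0 \<le> i" by linarith
  then show "seq_shift 1 (glue y (case_nat (y 0) w)) i = glue (seq_shift 1 y) w i"
  proof cases
    case 3
    then have "nat (i + 1) = Suc (nat i)" by simp
    then show ?thesis using 3 unfolding seq_shift_def glue_def by simp
  qed (simp_all add: seq_shift_def glue_def)
qed

lemma follower_presented:
  "follower (presented H) y =
     \<Union> (vfollower H ` {src H (x 0) | x. x \<in> edge_shift H \<and> (\<forall>i<0. lab H (x i) = y i)})"
    (is "_ = \<Union> (vfollower H ` ?T)")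
proof
  show "follower (presented H) y \<subseteq> \<Union> (vfollower H ` ?T)"
  proof
    fix w assume "w \<in> follower (presented H) y"
    then obtain x where x: "x \<in> edge_shift H" "glue y w = lab H \<circ> x"
      unfolding follower_eq presented_def by auto
    have "\<forall>i<0. lab H (x i) = y i"
      using fun_cong[OF x(2)] unfolding glue_def by (metis comp_apply)
    then have "src H (x 0) \<in> ?T" using x(1) by blast
    moreover have "w = lab H \<circ> (\<lambda>n. x (int n))"
      using fun_cong[OF x(2), of "int n" for n] unfolding glue_def by auto
    then have "w \<in> vfollower H (src H (x 0))"
      using right_path_of_edge_shift[OF x(1)] unfolding vfollower_def by fastforce
    ultimately show "w \<in> \<Union> (vfollower H ` ?T)" by blast
  qed
  show "\<Union> (vfollower H ` ?T) \<subseteq> follower (presented H) y"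
  proof
    fix w assume "w \<in> \<Union> (vfollower H ` ?T)"
    then obtain x r where x: "x \<in> edge_shift H" "\<forall>i<0. lab H (x i) = y i"
      and r: "r \<in> right_paths H" "src H (r 0) = src H (x 0)" "w = lab H \<circ> r"
      unfolding vfollower_def by auto
    have "glue y w = glue (lab H \<circ> x) (lab H \<circ> r)"
      using x(2) r(3) unfolding glue_def by auto
    then have "glue y w = lab H \<circ> glue x r" by (simp add: lab_glue)
    then show "w \<in> follower (presented H) y"
      using glue_edge_shift[OF x(1) r(1,2)] unfolding follower_eq presented_def by auto
  qed
qed

lemma finite_follower_sets_presented:
  assumes "lgraph H"
  shows "finite (follower_sets (presented H))"
proof (rule finite_subset)
  have "{src H (x 0) | x. x \<in> edge_shift H \<and> (\<forall>i<0. lab H (x i) = y i)} \<subseteq> verts H" for y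
    using assms unfolding lgraph_def edge_shift_def by blast
  then show "follower_sets (presented H) \<subseteq> (\<lambda>T. \<Union> (vfollower H ` T)) ` Pow (verts H)"
    unfolding follower_sets_def follower_presented by blast
  show "finite ((\<lambda>T. \<Union> (vfollower H ` T)) ` Pow (verts H))"
    using assms unfolding lgraph_def by simp
qed

locale shift_space =
  fixes Y :: "(int \<Rightarrow> 'a) set"
  assumes shift_closed: "y \<in> Y \<Longrightarrow> seq_shift k y \<in> Y"
    and limit_closed: "(\<And>n. \<exists>q\<in>Y. \<forall>i. \<bar>i\<bar> \<le> int n \<longrightarrow> q i = y i) \<Longrightarrow> y \<in> Y"

lemma shift_space_presented: "lgraph H \<Longrightarrow> shift_space (presented H)"
  by unfold_locales (auto intro: presented_seq_shift presented_limit_closed)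

lemma future_cover_simps [simp]:
  "verts (future_cover Y) = follower_sets Y"
  "src (future_cover Y) = fst"
  "trg (future_cover Y) = (\<lambda>e. snd (snd e))"
  "lab (future_cover Y) = (\<lambda>e. fst (snd e))"
  unfolding future_cover_def by simp_all

lemma mem_edges_future_cover:
  "(u, a, v) \<in> edges (future_cover Y) \<longleftrightarrow>
     u \<in> follower_sets Y \<and> v \<in> follower_sets Y \<and> v = {w. case_nat a w \<in> u}"
  unfolding future_cover_def by simp

lemma ends_edge_future_cover:
  assumes "e \<in> edges (future_cover Y)"
  shows "fst e \<in> follower_sets Y" "snd (snd e) \<in> follower_sets Y"
  using assms unfolding future_cover_def by auto

lemma right_resolving_future_cover: "right_resolving (future_cover Y)"
  unfolding right_resolving_def future_cover_def by auto

definition prepend :: "nat \<Rightarrow> (nat \<Rightarrow> 'a) \<Rightarrow> (nat \<Rightarrow> 'a) \<Rightarrow> nat \<Rightarrow> 'a" where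
  "prepend k a v = (\<lambda>m. if m < k then a m else v (m - k))"

lemma prepend_case_nat: "prepend k a (case_nat (a k) v) = prepend (Suc k) a v"
proof
  fix m
  show "prepend k a (case_nat (a k) v) m = prepend (Suc k) a v m"
  proof (cases "k < m")
    case True
    then have "m - k = Suc (m - Suc k)" by simp
    then show ?thesis using True unfolding prepend_def by simp
  qed (auto simp: prepend_def less_Suc_eq)
qed

lemma future_cover_prepend:
  assumes "x \<in> right_paths (future_cover Y)" "v \<in> fst (x k)"
  shows "prepend k (\<lambda>n. fst (snd (x n))) v \<in> fst (x 0)"
  using assms(2)
proof (induction k arbitrary: v)
  case 0
  then show ?case unfolding prepend_def by simp
next
  case (Suc k)
  have "x k \<in> edges (future_cover Y)" "snd (snd (x k)) = fst (x (Suc k))"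
    using assms(1) unfolding right_paths_def by simp_all
  then have "fst (x (Suc k)) = {w. case_nat (fst (snd (x k))) w \<in> fst (x k)}"
    by (cases "x k") (simp add: mem_edges_future_cover)
  then show ?case
    using Suc.IH[of "case_nat (fst (snd (x k))) v"] Suc.prems
      prepend_case_nat[of k "\<lambda>n. fst (snd (x n))" v] by simp
qed

definition cover_path :: "(int \<Rightarrow> 'a) set \<Rightarrow> (int \<Rightarrow> 'a) \<Rightarrow> int \<Rightarrow>
    (nat \<Rightarrow> 'a) set \<times> 'a \<times> (nat \<Rightarrow> 'a) set" where
  "cover_path Y y i = (follower Y (seq_shift i y), y i, follower Y (seq_shift (i + 1) y))"

lemma lab_cover_path: "lab (future_cover Y) \<circ> cover_path Y y = y"
  unfolding cover_path_def by auto

context shift_space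
begin

lemma follower_seq_shift_1: "follower Y (seq_shift 1 y) = {w. case_nat (y 0) w \<in> follower Y y}"
proof -
  have "glue y (case_nat (y 0) w) \<in> Y \<longleftrightarrow> glue (seq_shift 1 y) w \<in> Y" for w
    using shift_closed[of "glue y (case_nat (y 0) w)" 1] shift_closed[of "glue (seq_shift 1 y) w" "- 1"]
    by (auto simp: seq_shift_glue_Suc [symmetric] seq_shift_seq_shift)
  then show ?thesis unfolding follower_eq by blast
qed

lemma cover_path_edge_shift:
  assumes "y \<in> Y"
  shows "cover_path Y y \<in> edge_shift (future_cover Y)"
proof -
  have "cover_path Y y i \<in> edges (future_cover Y)" for i
  proof -
    have "follower Y (seq_shift (i + 1) y) = {w. case_nat (y i) w \<in> follower Y (seq_shift i y)}"
      using follower_seq_shift_1[of "seq_shift i y"]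
      by (simp add: seq_shift_seq_shift add.commute) (simp add: seq_shift_def)
    moreover have "follower Y (seq_shift j y) \<in> follower_sets Y" for j
      using shift_closed[OF assms] unfolding follower_sets_def by blast
    ultimately show ?thesis unfolding cover_path_def mem_edges_future_cover by blast
  qed
  then show ?thesis unfolding edge_shift_def cover_path_def by simp
qed

lemma vfollower_future_cover:
  assumes "u \<in> follower_sets Y"
  shows "vfollower (future_cover Y) u = u"
proof
  obtain y where y: "y \<in> Y" "u = follower Y y" using assms unfolding follower_sets_def by blast
  show "vfollower (future_cover Y) u \<subseteq> u"
  proof
    fix w assume "w \<in> vfollower (future_cover Y) u"
    then obtain x where x: "x \<in> right_paths (future_cover Y)" "fst (x 0) = u"
      and w: "w = (\<lambda>n. fst (snd (x n)))"
      unfolding vfollower_def by (auto simp: comp_def)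
    \<comment> \<open>Each prefix of \<open>w\<close> continues inside \<open>u\<close>; closedness of \<open>Y\<close> does the rest.\<close>
    have "glue y w \<in> Y"
    proof (rule limit_closed)
      fix n
      have "fst (x (Suc n)) \<in> follower_sets Y"
        using x(1) ends_edge_future_cover(1) unfolding right_paths_def by blast
      then obtain v where "v \<in> fst (x (Suc n))" using ex_mem_follower_set by blast
      then have "glue y (prepend (Suc n) w v) \<in> Y"
        using future_cover_prepend[OF x(1)] x(2) y unfolding w follower_eq by simp
      moreover have "\<forall>i. \<bar>i\<bar> \<le> int n \<longrightarrow> glue y (prepend (Suc n) w v) i = glue y w i"
        unfolding glue_def prepend_def by auto
      ultimately show "\<exists>q\<in>Y. \<forall>i. \<bar>i\<bar> \<le> int n \<longrightarrow> q i = glue y w i" by blast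
    qed
    then show "w \<in> u" unfolding y(2) follower_eq by simp
  qed
  show "u \<subseteq> vfollower (future_cover Y) u"
  proof
    fix w assume "w \<in> u"
    then have yw: "glue y w \<in> Y" using y(2) unfolding follower_eq by simp
    have "(\<lambda>n. cover_path Y (glue y w) (int n)) \<in> right_paths (future_cover Y)"
      by (rule right_path_of_edge_shift[OF cover_path_edge_shift[OF yw]])
    moreover have "fst (cover_path Y (glue y w) 0) = u"
      unfolding cover_path_def y(2) by simp
    moreover have "w = lab (future_cover Y) \<circ> (\<lambda>n. cover_path Y (glue y w) (int n))"
      unfolding cover_path_def glue_def by auto
    ultimately show "w \<in> vfollower (future_cover Y) u" unfolding vfollower_def by fastforce
  qed
qed

lemma presented_future_cover: "presented (future_cover Y) = Y"
proof
  show "presented (future_cover Y) \<subseteq> Y"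
  proof
    fix y assume "y \<in> presented (future_cover Y)"
    then obtain z where z: "z \<in> edge_shift (future_cover Y)" and y: "y = (\<lambda>i. fst (snd (z i)))"
      unfolding presented_def by (auto simp: comp_def)
    show "y \<in> Y"
    proof (rule limit_closed)
      fix n
      have "fst (z (- int n)) \<in> follower_sets Y"
        using z ends_edge_future_cover(1) unfolding edge_shift_def by blast
      then obtain p where p: "p \<in> Y" "fst (z (- int n)) = follower Y p"
        unfolding follower_sets_def by blast
      \<comment> \<open>The labels from position \<open>-n\<close> on form a future of \<open>p\<close>.\<close>
      define r where "r k = z (int k - int n)" for k
      have "r \<in> right_paths (future_cover Y)"
        using z unfolding r_def edge_shift_def right_paths_def by (simp add: algebra_simps)
      then have "(\<lambda>k. y (int k - int n)) \<in> vfollower (future_cover Y) (fst (z (- int n)))"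
        unfolding vfollower_def r_def y by fastforce
      then have "glue p (\<lambda>k. y (int k - int n)) \<in> Y"
        using vfollower_future_cover \<open>fst (z (- int n)) \<in> follower_sets Y\<close> p(2)
        unfolding follower_eq by auto
      then have "seq_shift (int n) (glue p (\<lambda>k. y (int k - int n))) \<in> Y" by (rule shift_closed)
      moreover have "\<forall>i. \<bar>i\<bar> \<le> int n \<longrightarrow> seq_shift (int n) (glue p (\<lambda>k. y (int k - int n))) i = y i"
        unfolding seq_shift_def glue_def by auto
      ultimately show "\<exists>q\<in>Y. \<forall>i. \<bar>i\<bar> \<le> int n \<longrightarrow> q i = y i" by blast
    qed
  qed
  show "Y \<subseteq> presented (future_cover Y)"
    using cover_path_edge_shift lab_cover_path unfolding presented_def by (metis image_eqI subsetI)
qed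

lemma regular_future_cover: "regular (future_cover Y)"
  unfolding regular_def regular_vertex_def
proof
  fix v assume "v \<in> verts (future_cover Y)"
  then obtain y where y: "y \<in> Y" "v = follower Y y" by (auto simp: follower_sets_def)
  have "trg (future_cover Y) (cover_path Y y (- 1)) = v"
    unfolding cover_path_def y(2) by simp
  moreover have "vfollower (future_cover Y) v
      = follower (presented (future_cover Y)) (lab (future_cover Y) \<circ> cover_path Y y)"
    unfolding lab_cover_path presented_future_cover
    using vfollower_future_cover \<open>v \<in> verts (future_cover Y)\<close> y(2) by simp
  ultimately show "\<exists>z\<in>edge_shift (future_cover Y). trg (future_cover Y) (z (- 1)) = v \<and>
      vfollower (future_cover Y) v = follower (presented (future_cover Y)) (lab (future_cover Y) \<circ> z)"
    using cover_path_edge_shift[OF y(1)] by blast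
qed

lemma follower_separated_future_cover: "follower_separated (future_cover Y)"
  unfolding follower_separated_def using vfollower_future_cover by simp

end

lemma lgraph_future_cover:
  fixes Y :: "(int \<Rightarrow> 'a::finite) set"
  assumes "shift_space Y" and finite: "finite (follower_sets Y)"
  shows "lgraph (future_cover Y)"
  unfolding lgraph_def
proof (intro conjI ballI)
  show "finite (verts (future_cover Y))" using finite by simp
  have "edges (future_cover Y) \<subseteq> follower_sets Y \<times> UNIV \<times> follower_sets Y"
    using ends_edge_future_cover by (auto simp: mem_Times_iff)
  then show "finite (edges (future_cover Y))"
    using finite by (simp add: finite_subset)
  fix e assume "e \<in> edges (future_cover Y)"
  then show "src (future_cover Y) e \<in> verts (future_cover Y)"
    and "trg (future_cover Y) e \<in> verts (future_cover Y)"
    using ends_edge_future_cover by simp_all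
next
  fix u assume "u \<in> verts (future_cover Y)"
  then obtain y where y: "y \<in> Y" "u = follower Y y" by (auto simp: follower_sets_def)
  then have "cover_path Y y 0 \<in> edges (future_cover Y)" "cover_path Y y (- 1) \<in> edges (future_cover Y)"
    using shift_space.cover_path_edge_shift[OF assms(1)] unfolding edge_shift_def by blast+
  moreover have "fst (cover_path Y y 0) = u" "snd (snd (cover_path Y y (- 1))) = u"
    unfolding cover_path_def y(2) by simp_all
  ultimately show "\<exists>e\<in>edges (future_cover Y). src (future_cover Y) e = u"
    and "\<exists>e\<in>edges (future_cover Y). trg (future_cover Y) e = u" by auto
qed

lemma right_paths_case_nat:
  assumes "e \<in> edges G" "r \<in> right_paths G" "src G (r 0) = trg G e"
  shows "case_nat e r \<in> right_paths G"
  using assms unfolding right_paths_def by (auto split: nat.split)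

lemma vfollower_trg:
  assumes rr: "right_resolving G" and e: "e \<in> edges G"
  shows "vfollower G (trg G e) = {w. case_nat (lab G e) w \<in> vfollower G (src G e)}"
proof
  show "vfollower G (trg G e) \<subseteq> {w. case_nat (lab G e) w \<in> vfollower G (src G e)}"
  proof
    fix w assume "w \<in> vfollower G (trg G e)"
    then obtain r where r: "r \<in> right_paths G" "src G (r 0) = trg G e" "w = lab G \<circ> r"
      unfolding vfollower_def by blast
    have "case_nat (lab G e) w = lab G \<circ> case_nat e r"
      using r(3) by (auto split: nat.split)
    then show "w \<in> {w. case_nat (lab G e) w \<in> vfollower G (src G e)}"
      using right_paths_case_nat[OF e r(1,2)] unfolding vfollower_def by fastforce
  qed
  show "{w. case_nat (lab G e) w \<in> vfollower G (src G e)} \<subseteq> vfollower G (trg G e)"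
  proof
    fix w assume "w \<in> {w. case_nat (lab G e) w \<in> vfollower G (src G e)}"
    then obtain r where r: "r \<in> right_paths G" "src G (r 0) = src G e"
      and lab_r: "case_nat (lab G e) w = lab G \<circ> r"
      unfolding vfollower_def by blast
    have "lab G (r 0) = lab G e" using fun_cong[OF lab_r, of 0] by simp
    then have "r 0 = e" using rr e r unfolding right_resolving_def right_paths_def by blast
    then have "(\<lambda>n. r (Suc n)) \<in> right_paths G" "src G (r (Suc 0)) = trg G e"
      using r(1) unfolding right_paths_def by auto
    moreover have "w = lab G \<circ> (\<lambda>n. r (Suc n))"
      using fun_cong[OF lab_r, of "Suc n" for n] by auto
    ultimately show "w \<in> vfollower G (trg G e)" unfolding vfollower_def by fastforce
  qed
qed

lemma ex_edge_of_vfollower: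
  assumes "case_nat a w \<in> vfollower G v"
  shows "\<exists>e\<in>edges G. src G e = v \<and> lab G e = a"
proof -
  obtain r where r: "r \<in> right_paths G" "src G (r 0) = v" "case_nat a w = lab G \<circ> r"
    using assms unfolding vfollower_def by blast
  have "lab G (r 0) = a" using fun_cong[OF r(3), of 0] by simp
  moreover have "r 0 \<in> edges G" using r(1) unfolding right_paths_def by blast
  ultimately show ?thesis using r(2) by blast
qed

lemma vfollower_in_follower_sets:
  assumes "regular_vertex G v"
  shows "vfollower G v \<in> follower_sets (presented G)"
proof -
  obtain z where "z \<in> edge_shift G" "vfollower G v = follower (presented G) (lab G \<circ> z)"
    using assms unfolding regular_vertex_def by blast
  then show ?thesis unfolding follower_sets_def presented_def by blast
qed

lemma edges_future_cover_subset_image: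
  assumes "right_resolving G" and img: "vfollower G ` verts G = follower_sets (presented G)"
  shows "edges (future_cover (presented G))
    \<subseteq> (\<lambda>e. (vfollower G (src G e), lab G e, vfollower G (trg G e))) ` edges G"
proof
  fix t assume t: "t \<in> edges (future_cover (presented G))"
  obtain u a v where uav: "t = (u, a, v)" by (cases t)
  have "u \<in> follower_sets (presented G)" "v \<in> follower_sets (presented G)"
    and v: "v = {w. case_nat a w \<in> u}"
    using t unfolding uav mem_edges_future_cover by auto
  then obtain s w where s: "s \<in> verts G" "u = vfollower G s" and "w \<in> v"
    using img ex_mem_follower_set by (metis imageE)
  then have "case_nat a w \<in> vfollower G s" using v by simp
  then obtain e where e: "e \<in> edges G" "src G e = s" "lab G e = a"
    by (blast dest: ex_edge_of_vfollower)
  then have "vfollower G (trg G e) = v" using vfollower_trg[OF assms(1) e(1)] v s(2) by simp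
  then show "t \<in> (\<lambda>e. (vfollower G (src G e), lab G e, vfollower G (trg G e))) ` edges G"
    using e s(2) uav by blast
qed

lemma lg_iso_future_cover:
  assumes G: "lgraph G" "right_resolving G"
    and bij: "bij_betw (vfollower G) (verts G) (follower_sets (presented G))"
  shows "lg_iso G (future_cover (presented G))"
proof -
  let ?\<phi> = "vfollower G"
  let ?\<psi> = "\<lambda>e. (?\<phi> (src G e), lab G e, ?\<phi> (trg G e))"
  have ends: "src G e \<in> verts G" "trg G e \<in> verts G" if "e \<in> edges G" for e
    using G(1) that unfolding lgraph_def by blast+
  have inj: "inj_on ?\<phi> (verts G)" and img: "?\<phi> ` verts G = follower_sets (presented G)"
    using bij unfolding bij_betw_def by blast+
  have "inj_on ?\<psi> (edges G)"
  proof (rule inj_onI)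
    fix e1 e2 assume e: "e1 \<in> edges G" "e2 \<in> edges G" "?\<psi> e1 = ?\<psi> e2"
    then have "?\<phi> (src G e1) = ?\<phi> (src G e2)" and "lab G e1 = lab G e2" by simp_all
    moreover from this(1) have "src G e1 = src G e2"
      using inj_onD[OF inj _ ends(1)[OF e(1)] ends(1)[OF e(2)]] by blast
    ultimately show "e1 = e2" using G(2) e(1,2) unfolding right_resolving_def by blast
  qed
  moreover have "?\<psi> e \<in> edges (future_cover (presented G))" if e: "e \<in> edges G" for e
    using img ends[OF e] vfollower_trg[OF G(2) e] by (auto simp: mem_edges_future_cover)
  then have "?\<psi> ` edges G = edges (future_cover (presented G))"
    using edges_future_cover_subset_image[OF G(2) img] by blast
  ultimately have "bij_betw ?\<psi> (edges G) (edges (future_cover (presented G)))"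
    unfolding bij_betw_def by blast
  then show ?thesis
    unfolding lg_iso_def using bij by (intro exI[of _ ?\<phi>] exI[of _ ?\<psi>]) simp
qed

theorem corollary3p3:
  fixes Y :: "(int \<Rightarrow> 'a::finite) set"
  assumes "sofic Y"
  shows "(\<forall>G :: ('v, 'e, 'a) lgraph.
            presents G Y \<and> right_resolving G \<and> regular G \<and> follower_separated G
            \<longrightarrow> card (verts G) \<le> card (follower_sets Y))
       \<and> (presents (future_cover Y) Y \<and> right_resolving (future_cover Y)
          \<and> regular (future_cover Y) \<and> follower_separated (future_cover Y)
          \<and> card (verts (future_cover Y)) = card (follower_sets Y))
       \<and> (\<forall>G :: ('v, 'e, 'a) lgraph.
            presents G Y \<and> right_resolving G \<and> regular G \<and> follower_separated G
            \<and> card (verts G) = card (follower_sets Y)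
            \<longrightarrow> lg_iso G (future_cover Y))"
proof -
  obtain H :: "(nat, nat, 'a) lgraph" where "lgraph H" "Y = presented H"
    using assms unfolding sofic_def presents_def by blast
  then have shift: "shift_space Y" and finite: "finite (follower_sets Y)"
    using shift_space_presented finite_follower_sets_presented by blast+
  have vf: "inj_on (vfollower G) (verts G)" "vfollower G ` verts G \<subseteq> follower_sets Y"
    if "presents G Y" "regular G" "follower_separated G" for G :: "('v, 'e, 'a) lgraph"
    using that vfollower_in_follower_sets[of G]
    unfolding presents_def regular_def follower_separated_def inj_on_def by auto
  have "lg_iso G (future_cover Y)"
    if "presents G Y" "right_resolving G" "regular G" "follower_separated G"
      and "card (verts G) = card (follower_sets Y)" for G :: "('v, 'e, 'a) lgraph"
  proof -
    have "bij_betw (vfollower G) (verts G) (follower_sets Y)"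
      using vf[OF that(1,3,4)] card_subset_eq[OF finite vf(2)[OF that(1,3,4)]] that(5)
      by (simp add: bij_betw_def card_image)
    then show ?thesis using lg_iso_future_cover[of G] that(1,2) unfolding presents_def by blast
  qed
  then show ?thesis
    using card_inj_on_le[OF vf finite] lgraph_future_cover[OF shift finite]
      shift_space.presented_future_cover[OF shift] right_resolving_future_cover
      shift_space.regular_future_cover[OF shift] shift_space.follower_separated_future_cover[OF shift]
    unfolding presents_def by auto
qed

end
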